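(* Let $n=3$ and $r=2$. Let $\theta=(\theta_1,\theta_2,\theta_3)\in\mathbb{R}^3$ and let $T_1,T_2,T_3$ be independent random variables with $T_i\sim N(\theta_i,1)$. Let $\Phi$ be the standard normal cumulative distribution function, and set $p_i=1-\Phi(T_i)$, $q_i=\Phi(T_i)$. With $p_{(1)}\le p_{(2)}\le p_{(3)}$ and $q_{(1)}\le q_{(2)}\le q_{(3)}$ the order statistics, define $p^+_{2/3}=2\,p_{(2)}$ and $p^-_{2/3}=2\,q_{(2)}$. Let $n^+=|\{i:\theta_i>0\}|$, $n^-=|\{i:\theta_i<0\}|$ and let $H_{2/3}$ be the hypothesis $n^+<2$ and $n^-<2$. Then $p_{2/3}=\min\{p^+_{2/3},p^-_{2/3}\}$ is a valid $p$-value for $H_{2/3}$: for every $\alpha\in(0,1/2)$ and every $\theta$ satisfying $H_{2/3}$, $\Pr_\theta(p_{2/3}\le\alpha)\le\alpha$.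
   Context: $p^+_{2/3}$ and $p^-_{2/3}$ are the Bonferroni partial conjunction $p$-values $(n-r+1)p_{(r)}$ and $(n-r+1)q_{(r)}$ with $n=3$, $r=2$. $H_{2/3}$ is the "2 out of 3 directional replicability" null hypothesis. *)

theory Defs
  imports "HOL-Probability.Probability"
begin

definition Phi :: "real \<Rightarrow> real" where
  "Phi x = measure (density lborel std_normal_density) {..x}"

definition order_stat :: "nat \<Rightarrow> nat \<Rightarrow> (nat \<Rightarrow> real) \<Rightarrow> real" where
  "order_stat n r f = sort (map f [0..<n]) ! (r - 1)"

text \<open>Bonferroni partial conjunction p-values for n = 3, r = 2.\<close>
definition p_plus_23 :: "(nat \<Rightarrow> real) \<Rightarrow> real" where
  "p_plus_23 t = (3 - 2 + 1) * order_stat 3 2 (\<lambda>i. 1 - Phi (t i))"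

definition p_minus_23 :: "(nat \<Rightarrow> real) \<Rightarrow> real" where
  "p_minus_23 t = (3 - 2 + 1) * order_stat 3 2 (\<lambda>i. Phi (t i))"

definition p_23 :: "(nat \<Rightarrow> real) \<Rightarrow> real" where
  "p_23 t = min (p_plus_23 t) (p_minus_23 t)"

definition H_23 :: "(nat \<Rightarrow> real) \<Rightarrow> bool" where
  "H_23 \<theta> \<longleftrightarrow> card {i \<in> {0..<3::nat}. \<theta> i > 0} < 2 \<and> card {i \<in> {0..<3::nat}. \<theta> i < 0} < 2"

end

theory Submission
  imports Defs
begin

(* Let c = alpha/2. If p_{2/3} <= alpha, then at least two of the one-sided p-values 1 - Phi(T_i)
   are at most c, or at least two of the Phi(T_i) are. By independence, an "at least two of three"
   event has probability xy + xz + yz - 2xyz in terms of the three marginal probabilities.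
   Under H_{2/3} there are distinct indices j, m, k with theta_j >= 0, theta_m <= 0, theta_k = 0;
   at k both rejection probabilities are at most c. Since the normal location family has monotone
   likelihood ratio, for theta <= 0 the ratio P(upper rejection) / P(acceptance) is at most its
   value c / (1 - 2c) at theta = 0, and symmetrically for the lower tail when theta >= 0. These
   linear constraints bound the sum of the two "at least two of three" probabilities by 2c. *)

lemma closed_downward_closed_eq_atMost:
  fixes S :: "real set"
  assumes "closed S" "S \<noteq> {}" "bdd_above S" "\<And>x y. x \<in> S \<Longrightarrow> y \<le> x \<Longrightarrow> y \<in> S"
  shows "S = {..Sup S}"
  using assms closed_contains_Sup[OF assms(2,3,1)] cSup_upper[OF _ assms(3)] by auto

lemma mono_sublevel_set_eq_atMost:
  fixes F :: "real \<Rightarrow> real"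
  assumes "mono F" "continuous_on UNIV F" "(F \<longlongrightarrow> a) at_bot" "(F \<longlongrightarrow> b) at_top"
    and "a < c" "c < b"
  obtains w where "{x. F x \<le> c} = {..w}"
proof -
  let ?S = "{x. F x \<le> c}"
  have closed: "closed ?S"
    by (rule closed_Collect_le[OF assms(2) continuous_on_const])
  obtain x0 where x0: "\<And>x. x \<le> x0 \<Longrightarrow> F x < c"
    using order_tendstoD(2)[OF assms(3,5)] unfolding eventually_at_bot_linorder by blast
  have "F x0 \<le> c"
    using x0[of x0] by simp
  then have nonempty: "?S \<noteq> {}"
    by blast
  obtain y where y: "\<And>x. y \<le> x \<Longrightarrow> c < F x"
    using order_tendstoD(1)[OF assms(4,6)] unfolding eventually_at_top_linorder by blast
  have bdd: "bdd_above ?S"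
  proof (rule bdd_aboveI)
    fix x assume "x \<in> ?S"
    then have "\<not> c < F x"
      by simp
    then show "x \<le> y"
      using y[of x] by linarith
  qed
  have "y \<in> ?S" if "x \<in> ?S" "y \<le> x" for x y
    using that monoD[OF assms(1), of y x] by simp
  then have "?S = {..Sup ?S}"
    by (rule closed_downward_closed_eq_atMost[OF closed nonempty bdd])
  then show thesis
    by (rule that)
qed

lemma mono_superlevel_set_eq_atLeast:
  fixes F :: "real \<Rightarrow> real"
  assumes "mono F" "continuous_on UNIV F" "(F \<longlongrightarrow> a) at_bot" "(F \<longlongrightarrow> b) at_top"
    and "a < c" "c < b"
  obtains z where "{x. c \<le> F x} = {z..}"
proof -
  let ?G = "\<lambda>x. - F (- x)"
  have mono: "mono ?G"
  proof (rule monoI)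
    fix x y :: real
    assume "x \<le> y"
    then have "F (- y) \<le> F (- x)"
      by (intro monoD[OF assms(1)]) simp
    then show "?G x \<le> ?G y"
      by simp
  qed
  have "continuous_on UNIV (\<lambda>x. F (- x))"
    by (rule continuous_on_compose2[OF assms(2) continuous_on_minus[OF continuous_on_id]]) simp
  then have cont: "continuous_on UNIV ?G"
    by (rule continuous_on_minus)
  have lim_bot: "(?G \<longlongrightarrow> - b) at_bot"
    by (rule tendsto_minus[OF filterlim_at_top_mirror[THEN iffD1, OF assms(4)]])
  have lim_top: "(?G \<longlongrightarrow> - a) at_top"
    by (rule tendsto_minus[OF filterlim_at_bot_mirror[THEN iffD1, OF assms(3)]])
  have "- b < - c" "- c < - a"
    using assms(5,6) by simp_all
  then obtain w where w: "{x. ?G x \<le> - c} = {..w}"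
    by (rule mono_sublevel_set_eq_atMost[OF mono cont lim_bot lim_top])
  have "{x. c \<le> F x} = {- w..}"
  proof (intro set_eqI iffI)
    fix x assume "x \<in> {x. c \<le> F x}"
    then have "- x \<in> {x. ?G x \<le> - c}" by simp
    then show "x \<in> {- w..}" unfolding w by simp
  next
    fix x assume "x \<in> {- w..}"
    then have "- x \<in> {x. ?G x \<le> - c}" unfolding w by simp
    then show "x \<in> {x. c \<le> F x}" by simp
  qed
  then show thesis
    by (rule that)
qed

definition normal_measure :: "real \<Rightarrow> real measure" where
  "normal_measure \<mu> = density lborel (normal_density \<mu> 1)"

lemma space_normal_measure [simp]: "space (normal_measure \<mu>) = UNIV"
  and sets_normal_measure [simp]: "sets (normal_measure \<mu>) = sets borel"
  by (simp_all add: normal_measure_def)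

lemma real_distribution_normal_measure: "real_distribution (normal_measure \<mu>)"
  using prob_space_normal_density[of 1 \<mu>]
  by (simp add: normal_measure_def real_distribution_def real_distribution_axioms_def)

interpretation normal_measure: real_distribution "normal_measure \<mu>"
  by (rule real_distribution_normal_measure)

lemma measure_normal_measure_singleton [simp]: "measure (normal_measure \<mu>) {x} = 0"
proof -
  have "emeasure (normal_measure \<mu>) {x} = 0"
    unfolding normal_measure_def by (subst emeasure_density) (auto intro!: nn_integral_null_set)
  then show ?thesis
    by (simp add: measure_def)
qed

lemma Phi_eq_cdf: "Phi = cdf (normal_measure 0)"
  by (simp add: Phi_def cdf_def fun_eq_iff normal_measure_def)

lemma mono_Phi: "mono Phi"
  unfolding Phi_eq_cdf by (intro monoI normal_measure.cdf_nondecreasing)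

lemma continuous_on_Phi: "continuous_on UNIV Phi"
  unfolding Phi_eq_cdf
  by (intro continuous_at_imp_continuous_on ballI) (simp add: normal_measure.isCont_cdf)

lemma Phi_at_bot: "(Phi \<longlongrightarrow> 0) at_bot"
  unfolding Phi_eq_cdf by (rule normal_measure.cdf_lim_at_bot)

lemma Phi_at_top: "(Phi \<longlongrightarrow> 1) at_top"
  unfolding Phi_eq_cdf by (rule normal_measure.cdf_lim_at_top_prob)

lemma borel_measurable_Phi [measurable]: "Phi \<in> borel_measurable borel"
  by (rule borel_measurable_continuous_onI[OF continuous_on_Phi])

definition pos_rejection_region :: "real \<Rightarrow> real set" where
  "pos_rejection_region c = {x. 1 - Phi x \<le> c}"

definition neg_rejection_region :: "real \<Rightarrow> real set" where
  "neg_rejection_region c = {x. Phi x \<le> c}"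

definition acceptance_region :: "real \<Rightarrow> real set" where
  "acceptance_region c = - (pos_rejection_region c \<union> neg_rejection_region c)"

lemma sets_rejection_regions [measurable]:
  "pos_rejection_region c \<in> sets borel" "neg_rejection_region c \<in> sets borel"
  "acceptance_region c \<in> sets borel"
  unfolding pos_rejection_region_def neg_rejection_region_def acceptance_region_def by measurable

lemma neg_rejection_region_eq_atMost:
  assumes "0 < c" "c < 1"
  obtains w where "neg_rejection_region c = {..w}"
  using mono_sublevel_set_eq_atMost[OF mono_Phi continuous_on_Phi Phi_at_bot Phi_at_top assms]
  unfolding neg_rejection_region_def .

lemma pos_rejection_region_eq_atLeast:
  assumes "0 < c" "c < 1"
  obtains z where "pos_rejection_region c = {z..}"
proof -
  have "pos_rejection_region c = {x. 1 - c \<le> Phi x}"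
    unfolding pos_rejection_region_def by auto
  moreover obtain z where "{x. 1 - c \<le> Phi x} = {z..}"
    using assms mono_superlevel_set_eq_atLeast[OF mono_Phi continuous_on_Phi Phi_at_bot Phi_at_top, of "1 - c"]
    by auto
  ultimately show thesis
    using that by simp
qed

lemma measure_neg_rejection_region_le:
  assumes "0 < c" "c < 1"
  shows "measure (normal_measure 0) (neg_rejection_region c) \<le> c"
proof -
  obtain w where w: "neg_rejection_region c = {..w}"
    using neg_rejection_region_eq_atMost[OF assms] .
  then have "Phi w \<le> c"
    unfolding neg_rejection_region_def using atMost_iff by blast
  then show ?thesis
    unfolding w by (simp add: Phi_eq_cdf cdf_def)
qed

lemma measure_pos_rejection_region_le:
  assumes "0 < c" "c < 1"
  shows "measure (normal_measure 0) (pos_rejection_region c) \<le> c"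
proof -
  obtain z where z: "pos_rejection_region c = {z..}"
    using pos_rejection_region_eq_atLeast[OF assms] .
  then have "1 - Phi z \<le> c"
    unfolding pos_rejection_region_def using atLeast_iff by blast
  have split: "{z..} = (UNIV - {..z}) \<union> {z}"
    by auto
  have "measure (normal_measure 0) {z..}
      \<le> measure (normal_measure 0) (UNIV - {..z}) + measure (normal_measure 0) {z}"
    unfolding split by (rule measure_Un_le) auto
  also have "\<dots> = 1 - Phi z"
    using normal_measure.prob_compl[of "{..z}" 0] by (simp add: Phi_eq_cdf cdf_def)
  finally show ?thesis
    unfolding z using \<open>1 - Phi z \<le> c\<close> by linarith
qed

lemma measure_rejection_acceptance_regions_sum:
  assumes "c < 1/2"
  shows "measure (normal_measure \<mu>) (pos_rejection_region c) + measure (normal_measure \<mu>) (neg_rejection_region c)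
    + measure (normal_measure \<mu>) (acceptance_region c) = 1"
proof -
  let ?U = "pos_rejection_region c" and ?L = "neg_rejection_region c"
  have "measure (normal_measure \<mu>) (?U \<union> ?L) = measure (normal_measure \<mu>) ?U + measure (normal_measure \<mu>) ?L"
    using assms by (intro normal_measure.finite_measure_Union)
      (auto simp: pos_rejection_region_def neg_rejection_region_def)
  moreover have "measure (normal_measure \<mu>) (acceptance_region c) = 1 - measure (normal_measure \<mu>) (?U \<union> ?L)"
    unfolding acceptance_region_def Compl_eq_Diff_UNIV
    by (intro normal_measure.prob_compl[simplified]) measurable
  ultimately show ?thesis
    by simp
qed

lemma measure_acceptance_region_ge:
  assumes "0 < c" "c < 1/2"
  shows "1 - 2 * c \<le> measure (normal_measure 0) (acceptance_region c)"
  using measure_rejection_acceptance_regions_sum[of c 0] measure_pos_rejection_region_le[of c]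
    measure_neg_rejection_region_le[of c] assms
  by linarith

lemma measure_density_scaled_le:
  fixes f g :: "'a \<Rightarrow> real"
  assumes "f \<in> borel_measurable M" "g \<in> borel_measurable M" "\<And>x. 0 \<le> f x"
    and "S \<in> sets M" "0 \<le> a" "0 \<le> b" "\<And>x. x \<in> S \<Longrightarrow> a * f x \<le> b * g x"
    and "emeasure (density M g) S \<noteq> \<infinity>"
  shows "a * measure (density M f) S \<le> b * measure (density M g) S"
proof -
  have "ennreal a * emeasure (density M f) S = (\<integral>\<^sup>+x. ennreal (a * f x) * indicator S x \<partial>M)"
    using assms by (simp add: emeasure_density nn_integral_cmult[symmetric] ennreal_mult mult.assoc)
  also have "\<dots> \<le> (\<integral>\<^sup>+x. ennreal (b * g x) * indicator S x \<partial>M)"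
    using assms(7) by (intro nn_integral_mono) (simp add: ennreal_leI split: split_indicator)
  also have "\<dots> = ennreal b * emeasure (density M g) S"
    using assms by (simp add: emeasure_density nn_integral_cmult[symmetric] ennreal_mult' mult.assoc)
  finally have "enn2real (ennreal a * emeasure (density M f) S) \<le> enn2real (ennreal b * emeasure (density M g) S)"
    using assms(8) by (intro enn2real_mono) (simp_all add: ennreal_mult_eq_top_iff less_top[symmetric])
  then show ?thesis
    using assms(5,6) by (simp add: measure_def enn2real_mult)
qed

lemma normal_density_eq_tilted:
  "normal_density \<mu> 1 x = std_normal_density x * exp (\<mu> * x - \<mu>\<^sup>2 / 2)"
proof -
  have "- (x - \<mu>)\<^sup>2 / 2 = - x\<^sup>2 / 2 + (\<mu> * x - \<mu>\<^sup>2 / 2)"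
    by (simp add: power2_eq_square field_simps)
  then show ?thesis
    by (simp add: normal_density_def exp_add[symmetric] del: exp_add)
qed

(* The density ratio exp (mu x - mu^2 / 2) of N(mu, 1) to N(0, 1) is monotone in x, so its value K
   at a point z separating A from R bounds it from above on A and from below on R. *)
lemma normal_measure_likelihood_ratio:
  assumes "A \<in> sets borel" "R \<in> sets borel"
    and "\<And>x. x \<in> A \<Longrightarrow> \<mu> * x \<le> \<mu> * z" "\<And>y. y \<in> R \<Longrightarrow> \<mu> * z \<le> \<mu> * y"
  shows "measure (normal_measure \<mu>) A * measure (normal_measure 0) R
    \<le> measure (normal_measure \<mu>) R * measure (normal_measure 0) A"
proof -
  define K where "K = exp (\<mu> * z - \<mu>\<^sup>2 / 2)"
  have A: "1 * measure (normal_measure \<mu>) A \<le> K * measure (normal_measure 0) A"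
    unfolding normal_measure_def
  proof (rule measure_density_scaled_le)
    show "1 * normal_density \<mu> 1 x \<le> K * normal_density 0 1 x" if "x \<in> A" for x
      using assms(3)[OF that] unfolding normal_density_eq_tilted[of \<mu>] K_def
      by (simp add: mult_left_mono mult.commute)
  qed (use assms(1) normal_measure.emeasure_finite[of 0] in \<open>auto simp: K_def normal_measure_def\<close>)
  have R: "K * measure (normal_measure 0) R \<le> 1 * measure (normal_measure \<mu>) R"
    unfolding normal_measure_def
  proof (rule measure_density_scaled_le)
    show "K * normal_density 0 1 y \<le> 1 * normal_density \<mu> 1 y" if "y \<in> R" for y
      using assms(4)[OF that] unfolding normal_density_eq_tilted[of \<mu>] K_def
      by (simp add: mult_left_mono mult.commute)
  qed (use assms(2) normal_measure.emeasure_finite[of \<mu>] in \<open>auto simp: K_def normal_measure_def\<close>)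
  have "measure (normal_measure \<mu>) A * measure (normal_measure 0) R
      \<le> (K * measure (normal_measure 0) A) * measure (normal_measure 0) R"
    using A by (intro mult_right_mono) simp_all
  also have "\<dots> = measure (normal_measure 0) A * (K * measure (normal_measure 0) R)"
    by (simp add: ac_simps)
  also have "\<dots> \<le> measure (normal_measure 0) A * measure (normal_measure \<mu>) R"
    using R by (intro mult_left_mono) simp_all
  finally show ?thesis
    by (simp add: mult.commute)
qed

lemma normal_measure_rejection_le_acceptance:
  assumes "0 < c" "c < 1/2" "T \<in> sets borel" "measure (normal_measure 0) T \<le> c"
    and "\<And>x. x \<in> T \<Longrightarrow> \<mu> * x \<le> \<mu> * z" "\<And>y. y \<in> acceptance_region c \<Longrightarrow> \<mu> * z \<le> \<mu> * y"
  shows "(1 - 2 * c) * measure (normal_measure \<mu>) T \<le> c * measure (normal_measure \<mu>) (acceptance_region c)"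
proof -
  let ?R = "acceptance_region c"
  have "(1 - 2 * c) * measure (normal_measure \<mu>) T \<le> measure (normal_measure 0) ?R * measure (normal_measure \<mu>) T"
    using measure_acceptance_region_ge[OF assms(1,2)] by (intro mult_right_mono) auto
  also have "\<dots> \<le> measure (normal_measure \<mu>) ?R * measure (normal_measure 0) T"
    using normal_measure_likelihood_ratio[OF assms(3) sets_rejection_regions(3) assms(5,6)]
    by (simp add: mult.commute)
  also have "\<dots> \<le> measure (normal_measure \<mu>) ?R * c"
    using assms(4) by (intro mult_left_mono) auto
  finally show ?thesis
    by (simp add: mult.commute)
qed

lemma normal_measure_pos_rejection_le_acceptance:
  assumes "0 < c" "c < 1/2" "\<mu> \<le> 0"
  shows "(1 - 2 * c) * measure (normal_measure \<mu>) (pos_rejection_region c)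
    \<le> c * measure (normal_measure \<mu>) (acceptance_region c)"
proof -
  obtain z where z: "pos_rejection_region c = {z..}"
    using pos_rejection_region_eq_atLeast[of c] assms by auto
  show ?thesis
  proof (rule normal_measure_rejection_le_acceptance[where z = z])
    show "\<mu> * x \<le> \<mu> * z" if "x \<in> pos_rejection_region c" for x
      using that assms(3) unfolding z by (simp add: mult_left_mono_neg)
    show "\<mu> * z \<le> \<mu> * y" if "y \<in> acceptance_region c" for y
      using that assms(3) unfolding acceptance_region_def z by (simp add: mult_left_mono_neg)
  qed (use assms measure_pos_rejection_region_le[of c] in auto)
qed

lemma normal_measure_neg_rejection_le_acceptance:
  assumes "0 < c" "c < 1/2" "0 \<le> \<mu>"
  shows "(1 - 2 * c) * measure (normal_measure \<mu>) (neg_rejection_region c)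
    \<le> c * measure (normal_measure \<mu>) (acceptance_region c)"
proof -
  obtain w where w: "neg_rejection_region c = {..w}"
    using neg_rejection_region_eq_atMost[of c] assms by auto
  show ?thesis
  proof (rule normal_measure_rejection_le_acceptance[where z = w])
    show "\<mu> * x \<le> \<mu> * w" if "x \<in> neg_rejection_region c" for x
      using that assms(3) unfolding w by (simp add: mult_left_mono)
    show "\<mu> * w \<le> \<mu> * y" if "y \<in> acceptance_region c" for y
      using that assms(3) unfolding acceptance_region_def w by (simp add: mult_left_mono)
  qed (use assms measure_neg_rejection_region_le[of c] in auto)
qed

definition two_of_three :: "(nat \<Rightarrow> bool) \<Rightarrow> bool" where
  "two_of_three P \<longleftrightarrow> P 0 \<and> P 1 \<or> P 0 \<and> P 2 \<or> P 1 \<and> P 2"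

definition two_of_three_prob :: "real \<Rightarrow> real \<Rightarrow> real \<Rightarrow> real" where
  "two_of_three_prob x y z = x * y + x * z + y * z - 2 * x * y * z"

lemma two_of_three_prob_perm:
  assumes "j < 3" "m < 3" "k < (3::nat)" "j \<noteq> m" "j \<noteq> k" "m \<noteq> k"
  shows "two_of_three_prob (f j) (f m) (f k) = two_of_three_prob (f 0) (f 1) (f 2)"
proof -
  have "j \<in> {0, 1, 2}" "m \<in> {0, 1, 2}" "k \<in> {0, 1, 2}"
    using assms by auto
  then show ?thesis
    using assms unfolding two_of_three_prob_def by (auto simp: algebra_simps)
qed

lemma two_of_three_prob_le:
  assumes "0 \<le> x" "x \<le> 1" "0 \<le> y" "y \<le> 1" "0 \<le> z" "z \<le> c"
  shows "two_of_three_prob x y z \<le> c * (x + y) + (1 - 2 * c) * (x * y)"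
proof -
  have "two_of_three_prob x y z = z * (x * (1 - y) + y * (1 - x)) + x * y"
    unfolding two_of_three_prob_def by (simp add: algebra_simps)
  also have "\<dots> \<le> c * (x * (1 - y) + y * (1 - x)) + x * y"
    using assms by (intro add_right_mono mult_right_mono) auto
  finally show ?thesis
    by (simp add: algebra_simps)
qed

lemma two_of_three_prob_sum_le:
  assumes "0 \<le> c" "c \<le> 1/2"
    and "0 \<le> aj" "0 \<le> bj" "0 \<le> rj" "aj + bj + rj = 1"
    and "0 \<le> am" "0 \<le> bm" "0 \<le> rm" "am + bm + rm = 1"
    and "0 \<le> ak" "ak \<le> c" "0 \<le> bk" "bk \<le> c"
    and "(1 - 2 * c) * bj \<le> c * rj" "(1 - 2 * c) * am \<le> c * rm"
  shows "two_of_three_prob aj am ak + two_of_three_prob bj bm bk \<le> 2 * c"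
proof -
  have "aj * ((1 - 2 * c) * am) \<le> 1 * (c * rm)"
    by (rule mult_mono) (use assms in auto)
  then have a: "two_of_three_prob aj am ak \<le> c * (aj + am) + c * rm"
    using two_of_three_prob_le[of aj am ak c] assms by (simp add: algebra_simps)
  have "bm * ((1 - 2 * c) * bj) \<le> 1 * (c * rj)"
    by (rule mult_mono) (use assms in auto)
  then have b: "two_of_three_prob bj bm bk \<le> c * (bj + bm) + c * rj"
    using two_of_three_prob_le[of bj bm bk c] assms by (simp add: algebra_simps)
  have "c * (aj + am) + c * rm + (c * (bj + bm) + c * rj) = c * ((aj + bj + rj) + (am + bm + rm))"
    by (simp add: algebra_simps)
  then show ?thesis
    using a b assms(6,10) by simp
qed

lemma (in prob_space) prob_two_of_three_indep_events:
  fixes E :: "nat \<Rightarrow> 'a set"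
  assumes "indep_events E {0..<3}"
  shows "prob (E 0 \<inter> E 1 \<union> E 0 \<inter> E 2 \<union> E 1 \<inter> E 2)
    = two_of_three_prob (prob (E 0)) (prob (E 1)) (prob (E 2))"
proof -
  have events: "E i \<in> events" if "i < 3" for i
    using assms that by (auto simp: indep_events_def)
  have prob_Inter: "prob (\<Inter>i\<in>J. E i) = (\<Prod>i\<in>J. prob (E i))" if "J \<subseteq> {0..<3}" "J \<noteq> {}" for J
    using assms that finite_subset[OF that(1)] by (auto simp: indep_events_def)
  have pair: "prob (E i \<inter> E j) = prob (E i) * prob (E j)" if "i < 3" "j < 3" "i \<noteq> j" for i j
    using prob_Inter[of "{i, j}"] that by auto
  have triple: "prob (E 0 \<inter> E 1 \<inter> E 2) = prob (E 0) * prob (E 1) * prob (E 2)"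
    using prob_Inter[of "{0, 1, 2}"] by (simp add: Int_assoc mult.assoc)
  have Un: "prob (A \<union> B) = prob A + prob B - prob (A \<inter> B)" if "A \<in> events" "B \<in> events" for A B
    using that by (intro measure_Un3) (simp_all add: fmeasurable_eq_sets)
  have "prob (E 0 \<inter> E 1 \<union> E 0 \<inter> E 2 \<union> E 1 \<inter> E 2)
      = prob (E 0 \<inter> E 1 \<union> E 0 \<inter> E 2) + prob (E 1 \<inter> E 2) - prob ((E 0 \<inter> E 1 \<union> E 0 \<inter> E 2) \<inter> (E 1 \<inter> E 2))"
    using events by (intro Un) auto
  also have "(E 0 \<inter> E 1 \<union> E 0 \<inter> E 2) \<inter> (E 1 \<inter> E 2) = E 0 \<inter> E 1 \<inter> E 2"
    by auto
  also have "prob (E 0 \<inter> E 1 \<union> E 0 \<inter> E 2) = prob (E 0 \<inter> E 1) + prob (E 0 \<inter> E 2) - prob (E 0 \<inter> E 1 \<inter> (E 0 \<inter> E 2))"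
    using events by (intro Un) auto
  also have "E 0 \<inter> E 1 \<inter> (E 0 \<inter> E 2) = E 0 \<inter> E 1 \<inter> E 2"
    by auto
  finally show ?thesis
    using pair[of 0 1] pair[of 0 2] pair[of 1 2] triple by (simp add: two_of_three_prob_def)
qed

lemma (in prob_space) prob_normal_distributed:
  assumes "distributed M lborel X (normal_density \<mu> 1)" "S \<in> sets borel"
  shows "prob {\<omega> \<in> space M. X \<omega> \<in> S} = measure (normal_measure \<mu>) S"
proof -
  have "X \<in> borel_measurable M"
    using distributed_measurable[OF assms(1)] by simp
  then have "prob {\<omega> \<in> space M. X \<omega> \<in> S} = measure (distr M lborel X) S"
    using assms(2) by (subst measure_distr) (auto simp: vimage_def Int_def conj_commute)
  also have "\<dots> = measure (normal_measure \<mu>) S"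
    by (simp add: distributed_distr_eq_density[OF assms(1)] normal_measure_def)
  finally show ?thesis .
qed

lemma (in prob_space) two_of_three_indep_normal:
  assumes indep: "indep_vars (\<lambda>_. borel) T {0..<3}"
    and normal: "\<And>i. i < 3 \<Longrightarrow> distributed M lborel (T i) (normal_density (\<theta> i) 1)"
    and S: "S \<in> sets borel"
  shows "{\<omega> \<in> space M. two_of_three (\<lambda>i. T i \<omega> \<in> S)} \<in> events" (is "?A \<in> _")
    and "prob {\<omega> \<in> space M. two_of_three (\<lambda>i. T i \<omega> \<in> S)} = two_of_three_prob
      (measure (normal_measure (\<theta> 0)) S) (measure (normal_measure (\<theta> 1)) S) (measure (normal_measure (\<theta> 2)) S)"
proof -
  define E where "E i = {\<omega> \<in> space M. T i \<omega> \<in> S}" for i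
  have A: "?A = E 0 \<inter> E 1 \<union> E 0 \<inter> E 2 \<union> E 1 \<inter> E 2"
    by (auto simp: E_def two_of_three_def)
  have indep_E: "indep_events E {0..<3}"
    unfolding E_def using S by (intro indep_eventsI_indep_vars[OF indep]) auto
  then have "E i \<in> events" if "i < 3" for i
    using that by (auto simp: indep_events_def)
  then show "?A \<in> events"
    unfolding A by auto
  have "prob (E i) = measure (normal_measure (\<theta> i)) S" if "i < 3" for i
    unfolding E_def using prob_normal_distributed[OF normal[OF that] S] .
  then show "prob ?A = two_of_three_prob
      (measure (normal_measure (\<theta> 0)) S) (measure (normal_measure (\<theta> 1)) S) (measure (normal_measure (\<theta> 2)) S)"
    unfolding A prob_two_of_three_indep_events[OF indep_E] by simp
qed

lemma order_stat_3_2_le_imp_two_of_three: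
  assumes "order_stat 3 2 f \<le> u"
  shows "two_of_three (\<lambda>i. f i \<le> u)"
  using assms by (auto simp: two_of_three_def order_stat_def eval_nat_numeral upt_rec split: if_splits)

lemma p_23_le_imp_two_of_three:
  assumes "p_23 t \<le> 2 * c"
  shows "two_of_three (\<lambda>i. t i \<in> pos_rejection_region c) \<or> two_of_three (\<lambda>i. t i \<in> neg_rejection_region c)"
proof -
  have "order_stat 3 2 (\<lambda>i. 1 - Phi (t i)) \<le> c \<or> order_stat 3 2 (\<lambda>i. Phi (t i)) \<le> c"
    using assms by (auto simp: p_23_def p_plus_23_def p_minus_23_def min_le_iff_disj)
  then show ?thesis
    unfolding pos_rejection_region_def neg_rejection_region_def
    by (auto dest: order_stat_3_2_le_imp_two_of_three)
qed

lemma sign_pattern_of_three: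
  fixes x y z :: real
  assumes "x \<le> 0 \<or> y \<le> 0" "x \<le> 0 \<or> z \<le> 0" "y \<le> 0 \<or> z \<le> 0"
    and "0 \<le> x \<or> 0 \<le> y" "0 \<le> x \<or> 0 \<le> z" "0 \<le> y \<or> 0 \<le> z"
  shows "(0 \<le> x \<and> y \<le> 0 \<and> z = 0) \<or> (0 \<le> x \<and> z \<le> 0 \<and> y = 0)
      \<or> (0 \<le> y \<and> x \<le> 0 \<and> z = 0) \<or> (0 \<le> y \<and> z \<le> 0 \<and> x = 0)
      \<or> (0 \<le> z \<and> x \<le> 0 \<and> y = 0) \<or> (0 \<le> z \<and> y \<le> 0 \<and> x = 0)"
  using assms by linarith

lemma H_23_sign_pattern:
  assumes "H_23 \<theta>"
  obtains j m k where "j < 3" "m < 3" "k < (3::nat)" "j \<noteq> m" "j \<noteq> k" "m \<noteq> k"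
    and "0 \<le> \<theta> j" "\<theta> m \<le> 0" "\<theta> k = 0"
proof -
  have at_most_one: "\<not> (P a \<and> P b)"
    if "card {i \<in> {0..<3::nat}. P i} < 2" "a < 3" "b < 3" "a \<noteq> b" for P a b
  proof
    assume "P a \<and> P b"
    then have "card {a, b} \<le> card {i \<in> {0..<3::nat}. P i}"
      using that by (intro card_mono) auto
    with that show False
      by simp
  qed
  have pos: "\<theta> a \<le> 0 \<or> \<theta> b \<le> 0" and neg: "0 \<le> \<theta> a \<or> 0 \<le> \<theta> b"
    if "a < 3" "b < 3" "a \<noteq> b" for a b
    using at_most_one[of "\<lambda>i. 0 < \<theta> i" a b] at_most_one[of "\<lambda>i. \<theta> i < 0" a b] assms that
    by (auto simp: H_23_def)
  have "(0 \<le> \<theta> 0 \<and> \<theta> 1 \<le> 0 \<and> \<theta> 2 = 0) \<or> (0 \<le> \<theta> 0 \<and> \<theta> 2 \<le> 0 \<and> \<theta> 1 = 0)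
      \<or> (0 \<le> \<theta> 1 \<and> \<theta> 0 \<le> 0 \<and> \<theta> 2 = 0) \<or> (0 \<le> \<theta> 1 \<and> \<theta> 2 \<le> 0 \<and> \<theta> 0 = 0)
      \<or> (0 \<le> \<theta> 2 \<and> \<theta> 0 \<le> 0 \<and> \<theta> 1 = 0) \<or> (0 \<le> \<theta> 2 \<and> \<theta> 1 \<le> 0 \<and> \<theta> 0 = 0)"
    by (rule sign_pattern_of_three) (rule pos neg; simp)+
  then show thesis
    by (elim disjE) (rule that[of 0 1 2] that[of 0 2 1] that[of 1 0 2] that[of 1 2 0] that[of 2 0 1] that[of 2 1 0]; simp)+
qed

lemma two_of_three_prob_normal_rejection_le:
  assumes "H_23 \<theta>" "0 < c" "c < 1/2"
  defines "a \<equiv> \<lambda>i. measure (normal_measure (\<theta> i)) (pos_rejection_region c)"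
    and "b \<equiv> \<lambda>i. measure (normal_measure (\<theta> i)) (neg_rejection_region c)"
  shows "two_of_three_prob (a 0) (a 1) (a 2) + two_of_three_prob (b 0) (b 1) (b 2) \<le> 2 * c"
proof -
  obtain j m k where perm: "j < 3" "m < 3" "k < 3" "j \<noteq> m" "j \<noteq> k" "m \<noteq> k"
    and signs: "0 \<le> \<theta> j" "\<theta> m \<le> 0" "\<theta> k = 0"
    using H_23_sign_pattern[OF assms(1)] .
  define r where "r i = measure (normal_measure (\<theta> i)) (acceptance_region c)" for i
  have "two_of_three_prob (a j) (a m) (a k) + two_of_three_prob (b j) (b m) (b k) \<le> 2 * c"
  proof (rule two_of_three_prob_sum_le)
    show "a j + b j + r j = 1" "a m + b m + r m = 1"
      unfolding a_def b_def r_def using measure_rejection_acceptance_regions_sum assms(3) by auto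
    show "a k \<le> c" "b k \<le> c"
      unfolding a_def b_def using signs(3) measure_pos_rejection_region_le measure_neg_rejection_region_le assms(2,3)
      by auto
    show "(1 - 2 * c) * b j \<le> c * r j"
      unfolding b_def r_def using normal_measure_neg_rejection_le_acceptance signs(1) assms(2,3) by auto
    show "(1 - 2 * c) * a m \<le> c * r m"
      unfolding a_def r_def using normal_measure_pos_rejection_le_acceptance signs(2) assms(2,3) by auto
  qed (use assms(2,3) in \<open>auto simp: a_def b_def r_def\<close>)
  then show ?thesis
    by (simp only: two_of_three_prob_perm[OF perm])
qed

theorem proposition1:
  fixes M :: "'a measure" and T :: "nat \<Rightarrow> 'a \<Rightarrow> real"
    and \<theta> :: "nat \<Rightarrow> real" and \<alpha> :: real
  assumes "prob_space M"
    and "prob_space.indep_vars M (\<lambda>_. borel) T {0..<3}"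
    and "\<And>i. i < 3 \<Longrightarrow> distributed M lborel (T i) (normal_density (\<theta> i) 1)"
    and "0 < \<alpha>" and "\<alpha> < 1/2"
    and "H_23 \<theta>"
  shows "measure M {\<omega> \<in> space M. p_23 (\<lambda>i. T i \<omega>) \<le> \<alpha>} \<le> \<alpha>"
proof -
  interpret prob_space M
    by (rule assms(1))
  define c where "c = \<alpha> / 2"
  have c: "0 < c" "c < 1/2"
    using assms(4,5) by (simp_all add: c_def)
  let ?A = "\<lambda>S. {\<omega> \<in> space M. two_of_three (\<lambda>i. T i \<omega> \<in> S)}"
  let ?U = "pos_rejection_region c" and ?L = "neg_rejection_region c"
  have events: "?A S \<in> events" if "S \<in> sets borel" for S
    using assms(2,3) that by (rule two_of_three_indep_normal(1))
  have prob: "prob (?A S) = two_of_three_prob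
      (measure (normal_measure (\<theta> 0)) S) (measure (normal_measure (\<theta> 1)) S) (measure (normal_measure (\<theta> 2)) S)"
    if "S \<in> sets borel" for S
    using assms(2,3) that by (rule two_of_three_indep_normal(2))
  have "{\<omega> \<in> space M. p_23 (\<lambda>i. T i \<omega>) \<le> \<alpha>} \<subseteq> ?A ?U \<union> ?A ?L"
    using p_23_le_imp_two_of_three[of _ c] by (auto simp: c_def)
  then have "measure M {\<omega> \<in> space M. p_23 (\<lambda>i. T i \<omega>) \<le> \<alpha>} \<le> prob (?A ?U \<union> ?A ?L)"
    using events[OF sets_rejection_regions(1)] events[OF sets_rejection_regions(2)]
    by (intro finite_measure_mono) auto
  also have "\<dots> \<le> prob (?A ?U) + prob (?A ?L)"
    using events[OF sets_rejection_regions(1)] events[OF sets_rejection_regions(2)]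
    by (rule measure_Un_le)
  also have "\<dots> \<le> 2 * c"
    unfolding prob[OF sets_rejection_regions(1)] prob[OF sets_rejection_regions(2)]
    by (rule two_of_three_prob_normal_rejection_le[OF assms(6) c])
  finally show ?thesis
    by (simp add: c_def)
qed

end
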